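(* Every locally finite quasivariety of Wajsberg hoops is a primitive variety.
   Context: Wajsberg hoops: basic hoops (0-free subreducts of prelinear divisible $\mathsf{FL}_{ew}$-algebras) satisfying $(x\to y)\to y\approx(y\to x)\to x$. A quasivariety is locally finite if its finitely generated members are finite. For a quasivariety $\mathcal Q$, a subquasivariety $\mathcal Q'$ is equational in $\mathcal Q$ if $\mathcal Q'=\mathbf H(\mathcal Q')\cap\mathcal Q$; $\mathcal Q$ is primitive if every subquasivariety of $\mathcal Q$ is equational in $\mathcal Q$ (equivalently, every subquasivariety of $\mathcal Q$ is structural, where $\mathcal Q$ is structural if for every subquasivariety $\mathcal Q'$, $\mathbf H(\mathcal Q')=\mathbf H(\mathcal Q)$ implies $\mathcal Q'=\mathcal Q$). *)

theory Defs
  imports Main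
begin

record 'a halg =
  car :: "'a set"
  mul :: "'a \<Rightarrow> 'a \<Rightarrow> 'a"
  imp :: "'a \<Rightarrow> 'a \<Rightarrow> 'a"
  one :: "'a"

definition is_alg :: "'a halg \<Rightarrow> bool" where
  "is_alg A \<longleftrightarrow> car A \<noteq> {} \<and> one A \<in> car A \<and>
     (\<forall>x\<in>car A. \<forall>y\<in>car A. mul A x y \<in> car A \<and> imp A x y \<in> car A)"

definition hle :: "'a halg \<Rightarrow> 'a \<Rightarrow> 'a \<Rightarrow> bool" where
  "hle A x y \<longleftrightarrow> imp A x y = one A"

definition hoop :: "'a halg \<Rightarrow> bool" where
  "hoop A \<longleftrightarrow> is_alg A \<and>
    (\<forall>x\<in>car A. \<forall>y\<in>car A. \<forall>z\<in>car A.
       mul A (mul A x y) z = mul A x (mul A y z) \<and>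
       mul A x y = mul A y x \<and>
       mul A x (one A) = x \<and>
       imp A x x = one A \<and>
       mul A x (imp A x y) = mul A y (imp A y x) \<and>
       imp A x (imp A y z) = imp A (mul A x y) z)"

definition basic_hoop :: "'a halg \<Rightarrow> bool" where
  "basic_hoop A \<longleftrightarrow> hoop A \<and>
    (\<forall>x\<in>car A. \<forall>y\<in>car A. \<forall>z\<in>car A.
       hle A (imp A (imp A x y) z) (imp A (imp A (imp A y x) z) z))"

definition wajsberg_hoop :: "'a halg \<Rightarrow> bool" where
  "wajsberg_hoop A \<longleftrightarrow> basic_hoop A \<and>
    (\<forall>x\<in>car A. \<forall>y\<in>car A. imp A (imp A x y) y = imp A (imp A y x) x)"

datatype trm = Var nat | One | Mul trm trm | Imp trm trm

primrec eval :: "'a halg \<Rightarrow> (nat \<Rightarrow> 'a) \<Rightarrow> trm \<Rightarrow> 'a" where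
  "eval A v (Var i) = v i"
| "eval A v One = one A"
| "eval A v (Mul s t) = mul A (eval A v s) (eval A v t)"
| "eval A v (Imp s t) = imp A (eval A v s) (eval A v t)"

type_synonym eqn = "trm \<times> trm"
type_synonym qeq = "eqn list \<times> eqn"   \<comment> \<open>premises, conclusion\<close>

definition sat_eqn :: "'a halg \<Rightarrow> (nat \<Rightarrow> 'a) \<Rightarrow> eqn \<Rightarrow> bool" where
  "sat_eqn A v e \<longleftrightarrow> eval A v (fst e) = eval A v (snd e)"

definition sat_qeq :: "'a halg \<Rightarrow> qeq \<Rightarrow> bool" where
  "sat_qeq A q \<longleftrightarrow> (\<forall>v. (\<forall>i. v i \<in> car A) \<longrightarrow>
      (\<forall>e\<in>set (fst q). sat_eqn A v e) \<longrightarrow> sat_eqn A v (snd q))"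

text \<open>Every quasivariety of Wajsberg
  hoops is of this form.\<close>
definition in_QV :: "qeq set \<Rightarrow> 'a halg \<Rightarrow> bool" where
  "in_QV \<Sigma> A \<longleftrightarrow> wajsberg_hoop A \<and> (\<forall>q\<in>\<Sigma>. sat_qeq A q)"

definition hom :: "('a \<Rightarrow> 'b) \<Rightarrow> 'a halg \<Rightarrow> 'b halg \<Rightarrow> bool" where
  "hom h A B \<longleftrightarrow> (\<forall>x\<in>car A. h x \<in> car B) \<and> h (one A) = one B \<and>
     (\<forall>x\<in>car A. \<forall>y\<in>car A. h (mul A x y) = mul B (h x) (h y) \<and>
                            h (imp A x y) = imp B (h x) (h y))"

definition hom_onto :: "('a \<Rightarrow> 'b) \<Rightarrow> 'a halg \<Rightarrow> 'b halg \<Rightarrow> bool" where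
  "hom_onto h A B \<longleftrightarrow> is_alg B \<and> hom h A B \<and> h ` car A = car B"

inductive_set gen :: "'a halg \<Rightarrow> 'a set \<Rightarrow> 'a set" for A G where
  gen_base: "x \<in> G \<Longrightarrow> x \<in> gen A G"
| gen_one: "one A \<in> gen A G"
| gen_mul: "x \<in> gen A G \<Longrightarrow> y \<in> gen A G \<Longrightarrow> mul A x y \<in> gen A G"
| gen_imp: "x \<in> gen A G \<Longrightarrow> y \<in> gen A G \<Longrightarrow> imp A x y \<in> gen A G"

definition fin_gen :: "'a halg \<Rightarrow> bool" where
  "fin_gen A \<longleftrightarrow> (\<exists>G. finite G \<and> G \<subseteq> car A \<and> gen A G = car A)"

text \<open>Finitely generated
  algebras are countable, so it suffices (and is equivalent) to quantify over
  algebras whose universe is a set of naturals.\<close>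
definition locally_finite_QV :: "qeq set \<Rightarrow> bool" where
  "locally_finite_QV \<Sigma> \<longleftrightarrow>
     (\<forall>A :: nat halg. in_QV \<Sigma> A \<and> fin_gen A \<longrightarrow> finite (car A))"

end

theory Submission
  imports Defs "HOL-Library.Countable" "HOL-Library.Countable_Set"
begin

text \<open>Let \<open>h\<close> map a member \<open>A\<close> of a locally finite quasivariety \<open>Q\<close> of Wajsberg hoops
  onto \<open>B\<close>. Whether a quasi-equation holds in \<open>B\<close> is decided on the images \<open>h(A\<^sub>0)\<close> of
  finitely generated, hence finite, subalgebras \<open>A\<^sub>0\<close> of \<open>A\<close>. In a finite Wajsberg hoop
  the filter \<open>h\<^sup>-\<^sup>1(1)\<close> has a least element \<open>e\<close>; it is idempotent, and \<open>x \<mapsto> e \<rightarrow> x\<close> is an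
  endomorphism with the same kernel as \<open>h\<close>. So \<open>h(A\<^sub>0)\<close> embeds into \<open>A\<^sub>0 \<in> Q\<close> and lies in
  \<open>Q\<close>, whence so does \<open>B\<close>. Every subquasivariety of \<open>Q\<close> is locally finite as well, so the
  same argument shows that it is closed under homomorphic images: \<open>Q\<close> is primitive.\<close>

section \<open>Hoop arithmetic\<close>

locale hoop_alg =
  fixes A :: "'a halg"
  assumes hoop: "hoop A"
begin

abbreviation mul_op (infixl "\<odot>" 70) where "x \<odot> y \<equiv> mul A x y"
abbreviation imp_op (infixr "\<leadsto>" 60) where "x \<leadsto> y \<equiv> imp A x y"
abbreviation one_el ("\<one>") where "\<one> \<equiv> one A"
abbreviation le (infix "\<preceq>" 50) where "x \<preceq> y \<equiv> x \<leadsto> y = \<one>"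

lemma one_closed [simp]: "\<one> \<in> car A"
  and mul_closed [simp]: "x \<in> car A \<Longrightarrow> y \<in> car A \<Longrightarrow> x \<odot> y \<in> car A"
  and imp_closed [simp]: "x \<in> car A \<Longrightarrow> y \<in> car A \<Longrightarrow> x \<leadsto> y \<in> car A"
  using hoop by (auto simp: hoop_def is_alg_def)

lemma mul_assoc: "x \<in> car A \<Longrightarrow> y \<in> car A \<Longrightarrow> z \<in> car A \<Longrightarrow> x \<odot> y \<odot> z = x \<odot> (y \<odot> z)"
  and mul_comm: "x \<in> car A \<Longrightarrow> y \<in> car A \<Longrightarrow> x \<odot> y = y \<odot> x"
  and mul_one [simp]: "x \<in> car A \<Longrightarrow> x \<odot> \<one> = x"
  and imp_self [simp]: "x \<in> car A \<Longrightarrow> x \<leadsto> x = \<one>"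
  and divisibility: "x \<in> car A \<Longrightarrow> y \<in> car A \<Longrightarrow> x \<odot> (x \<leadsto> y) = y \<odot> (y \<leadsto> x)"
  and residuation: "x \<in> car A \<Longrightarrow> y \<in> car A \<Longrightarrow> z \<in> car A \<Longrightarrow> x \<leadsto> (y \<leadsto> z) = (x \<odot> y) \<leadsto> z"
  using hoop unfolding hoop_def by blast+

lemma one_mul [simp]: "x \<in> car A \<Longrightarrow> \<one> \<odot> x = x"
  using mul_comm[of "\<one>" x] by simp

lemma le_antisym:
  assumes "x \<in> car A" "y \<in> car A" "x \<preceq> y" "y \<preceq> x"
  shows "x = y"
proof -
  have "x = x \<odot> (x \<leadsto> y)" using assms by simp
  also have "\<dots> = y \<odot> (y \<leadsto> x)" using assms divisibility by blast
  finally show ?thesis using assms by simp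
qed

lemma one_imp [simp]:
  assumes x: "x \<in> car A"
  shows "\<one> \<leadsto> x = x"
proof (rule le_antisym)
  show "(\<one> \<leadsto> x) \<leadsto> x = \<one>"
    using residuation[of "\<one> \<leadsto> x" "\<one>" x] x by simp
  show "x \<leadsto> (\<one> \<leadsto> x) = \<one>"
    using residuation[of x "\<one>" x] x by simp
qed (use x in simp_all)

lemma imp_one [simp]:
  assumes x: "x \<in> car A"
  shows "x \<preceq> \<one>"
proof -
  let ?b = "x \<leadsto> \<one>"
  have "?b \<odot> x = x" using divisibility[of x "\<one>"] x mul_comm[of x ?b] by simp
  have "\<one> = ?b \<leadsto> ?b" using x by simp
  also have "\<dots> = (?b \<odot> x) \<leadsto> \<one>" using residuation[of ?b x "\<one>"] x by simp
  also have "\<dots> = ?b" using \<open>?b \<odot> x = x\<close> by simp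
  finally show ?thesis by (rule sym)
qed

lemma mul_le_left: "x \<in> car A \<Longrightarrow> y \<in> car A \<Longrightarrow> x \<odot> y \<preceq> x"
  by (metis mul_comm residuation imp_self imp_one)

lemma mul_imp_le: "x \<in> car A \<Longrightarrow> y \<in> car A \<Longrightarrow> x \<odot> (x \<leadsto> y) \<preceq> y"
  by (metis mul_comm residuation imp_self imp_closed)

lemma le_imp_left: "x \<in> car A \<Longrightarrow> e \<in> car A \<Longrightarrow> x \<preceq> e \<leadsto> x"
  using residuation mul_le_left by simp

lemma le_trans:
  assumes "x \<in> car A" "y \<in> car A" "z \<in> car A" "x \<preceq> y" "y \<preceq> z"
  shows "x \<preceq> z"
proof -
  have "x = y \<odot> (y \<leadsto> x)" using assms divisibility[of x y] by simp
  hence "x \<leadsto> z = ((y \<leadsto> x) \<odot> y) \<leadsto> z" using assms mul_comm by simp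
  also have "\<dots> = (y \<leadsto> x) \<leadsto> (y \<leadsto> z)" by (rule residuation[symmetric]) (use assms in simp_all)
  finally show ?thesis using assms by simp
qed

lemma mul_mono_left:
  assumes "x \<in> car A" "y \<in> car A" "z \<in> car A" "x \<preceq> y"
  shows "x \<odot> z \<preceq> y \<odot> z"
proof -
  have "y \<preceq> z \<leadsto> y \<odot> z" using assms residuation by simp
  hence "x \<preceq> z \<leadsto> y \<odot> z" using le_trans[of x y] assms by simp
  thus ?thesis using assms residuation by simp
qed

lemma mul_mono:
  assumes "a \<in> car A" "b \<in> car A" "x \<in> car A" "y \<in> car A" "a \<preceq> x" "b \<preceq> y"
  shows "a \<odot> b \<preceq> x \<odot> y"
proof -
  have "a \<odot> b \<preceq> x \<odot> b" using mul_mono_left assms by simp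
  moreover have "x \<odot> b \<preceq> x \<odot> y" using mul_mono_left[of b y x] mul_comm assms by simp
  ultimately show ?thesis using le_trans assms by (meson mul_closed)
qed

lemma imp_mono_right:
  assumes "e \<in> car A" "y \<in> car A" "z \<in> car A" "y \<preceq> z"
  shows "e \<leadsto> y \<preceq> e \<leadsto> z"
proof -
  have "(e \<leadsto> y) \<odot> e \<preceq> y" using assms residuation[of "e \<leadsto> y" e y] by simp
  hence "(e \<leadsto> y) \<odot> e \<preceq> z" using le_trans assms by (meson imp_closed mul_closed)
  thus ?thesis using assms residuation by simp
qed

lemma imp_antimono_left:
  assumes "x \<in> car A" "y \<in> car A" "z \<in> car A" "x \<preceq> y"
  shows "y \<leadsto> z \<preceq> x \<leadsto> z"
proof -
  have "(y \<leadsto> z) \<odot> x \<preceq> (y \<leadsto> z) \<odot> y"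
    using mul_mono_left[of x y "y \<leadsto> z"] assms mul_comm by simp
  moreover have "(y \<leadsto> z) \<odot> y \<preceq> z" using assms residuation[of "y \<leadsto> z" y z] by simp
  ultimately have "(y \<leadsto> z) \<odot> x \<preceq> z" using le_trans assms by (meson imp_closed mul_closed)
  thus ?thesis using assms residuation by simp
qed

lemma mul_closed_finite_has_least:
  assumes "finite F" "F \<noteq> {}" "F \<subseteq> car A" and closed: "\<And>x y. x \<in> F \<Longrightarrow> y \<in> F \<Longrightarrow> x \<odot> y \<in> F"
  shows "\<exists>e\<in>F. \<forall>x\<in>F. e \<preceq> x"
proof -
  have "\<exists>e\<in>F. \<forall>x\<in>X. e \<preceq> x" if "finite X" "X \<noteq> {}" "X \<subseteq> F" for X
    using that
  proof (induction X rule: finite_ne_induct)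
    case (singleton x)
    thus ?case using \<open>F \<subseteq> car A\<close> by (intro bexI[of _ x]) auto
  next
    case (insert x X)
    then obtain e where e: "e \<in> F" "\<forall>y\<in>X. e \<preceq> y" by auto
    have x: "x \<in> F" using insert by simp
    have xe: "x \<in> car A" "e \<in> car A" using x e \<open>F \<subseteq> car A\<close> by auto
    have "x \<odot> e \<preceq> y" if "y \<in> insert x X" for y
    proof (cases "y = x")
      case True
      thus ?thesis using mul_le_left xe by simp
    next
      case False
      hence "e \<preceq> y" "y \<in> car A" using that e insert \<open>F \<subseteq> car A\<close> by auto
      moreover have "x \<odot> e \<preceq> e" using mul_le_left[of e x] mul_comm[of x e] xe by simp
      ultimately show ?thesis using le_trans[of "x \<odot> e" e y] xe by simp
    qed
    thus ?case using closed[OF x e(1)] by blast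
  qed
  from this[OF assms(1,2) order_refl] show ?thesis .
qed

end

section \<open>Translations by idempotents in Wajsberg hoops\<close>

locale wajsberg_alg = hoop_alg +
  assumes wajsberg: "x \<in> car A \<Longrightarrow> y \<in> car A \<Longrightarrow> (x \<leadsto> y) \<leadsto> y = (y \<leadsto> x) \<leadsto> x"
begin

text \<open>In a Wajsberg hoop \<open>(a \<leadsto> b) \<leadsto> b\<close> is the join of \<open>a\<close> and \<open>b\<close>.\<close>

lemma join_least:
  assumes "a \<in> car A" "b \<in> car A" "c \<in> car A" "a \<preceq> c" "b \<preceq> c"
  shows "(a \<leadsto> b) \<leadsto> b \<preceq> c"
proof -
  have "c \<leadsto> b \<preceq> a \<leadsto> b" using imp_antimono_left assms by simp
  hence "(a \<leadsto> b) \<leadsto> b \<preceq> (c \<leadsto> b) \<leadsto> b" using imp_antimono_left assms by simp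
  moreover have "(c \<leadsto> b) \<leadsto> b = c" using wajsberg[of c b] assms by simp
  ultimately show ?thesis by simp
qed

lemma le_by_join_cases:
  assumes "a \<in> car A" "b \<in> car A" "t \<in> car A" "s \<in> car A" "(a \<leadsto> b) \<leadsto> b = \<one>"
    "t \<odot> a \<preceq> s" "t \<odot> b \<preceq> s"
  shows "t \<preceq> s"
proof -
  have "a \<leadsto> (t \<leadsto> s) = (t \<odot> a) \<leadsto> s" "b \<leadsto> (t \<leadsto> s) = (t \<odot> b) \<leadsto> s"
    using assms residuation mul_comm by simp_all
  hence "(a \<leadsto> b) \<leadsto> b \<preceq> t \<leadsto> s" using join_least[of a b "t \<leadsto> s"] assms by simp
  thus ?thesis using assms by simp
qed

context
  fixes e assumes e: "e \<in> car A" and idem: "e \<odot> e = e"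
begin

lemma imp_idem_mul_le: "x \<in> car A \<Longrightarrow> (e \<leadsto> x) \<odot> e \<preceq> e \<odot> x"
proof -
  assume x: "x \<in> car A"
  have "(e \<leadsto> x) \<odot> e = (e \<odot> (e \<leadsto> x)) \<odot> e"
    using e x idem by (metis mul_assoc mul_comm imp_closed)
  moreover have "(e \<odot> (e \<leadsto> x)) \<odot> e \<preceq> x \<odot> e" using mul_mono_left mul_imp_le e x by simp
  ultimately show ?thesis using mul_comm e x by simp
qed

lemma imp_idem_mono:
  assumes x: "x \<in> car A" and y: "y \<in> car A" and le: "e \<preceq> x \<leadsto> y"
  shows "e \<leadsto> x \<preceq> e \<leadsto> y"
proof -
  have "e \<odot> x \<preceq> y" using le residuation e x y by simp
  hence "(e \<leadsto> x) \<odot> e \<preceq> y" using le_trans[OF _ _ _ imp_idem_mul_le[OF x]] e x y by simp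
  thus ?thesis using residuation e x y by simp
qed

lemma imp_idem_imp_distrib:
  assumes x: "x \<in> car A" and y: "y \<in> car A"
  shows "e \<leadsto> (x \<leadsto> y) = (e \<leadsto> x) \<leadsto> (e \<leadsto> y)"
proof -
  let ?p = "e \<leadsto> (x \<leadsto> y)"
  have p: "?p = x \<leadsto> (e \<leadsto> y)" using residuation mul_comm e x y by metis
  have pc: "?p \<in> car A" using e x y by simp
  have le1: "(e \<leadsto> x) \<leadsto> (e \<leadsto> y) \<preceq> ?p"
    using p imp_antimono_left[of x "e \<leadsto> x" "e \<leadsto> y"] le_imp_left[OF x e] e x y by simp
  have s1: "?p \<odot> ((e \<leadsto> x) \<odot> e) \<preceq> ?p \<odot> (e \<odot> x)"
    using mul_mono_left[OF _ _ pc imp_idem_mul_le[OF x]] mul_comm e x y pc by (metis imp_closed mul_closed)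
  have eq: "?p \<odot> (e \<odot> x) = (x \<odot> ?p) \<odot> e" using mul_comm mul_assoc e x pc by (metis mul_closed)
  have s2: "(x \<odot> ?p) \<odot> e \<preceq> (e \<leadsto> y) \<odot> e"
    using mul_mono_left[OF _ _ e mul_imp_le[of x "e \<leadsto> y"]] p e x y by simp
  have s3: "(e \<leadsto> y) \<odot> e \<preceq> y" using mul_imp_le[OF e y] mul_comm e y by simp
  have "?p \<odot> ((e \<leadsto> x) \<odot> e) \<preceq> y"
    using le_trans[OF _ _ _ s1[unfolded eq] le_trans[OF _ _ _ s2 s3]] e x y pc by simp
  hence le2: "?p \<preceq> (e \<leadsto> x) \<leadsto> (e \<leadsto> y)" using residuation mul_assoc e x y pc by simp
  show ?thesis using le_antisym[OF pc _ le2 le1] e x y by simp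
qed

lemma imp_idem_mul_distrib:
  assumes x: "x \<in> car A" and y: "y \<in> car A"
  shows "e \<leadsto> (x \<odot> y) = (e \<leadsto> x) \<odot> (e \<leadsto> y)"
proof -
  let ?t = "e \<leadsto> (x \<odot> y)" and ?u = "e \<leadsto> x" and ?v = "e \<leadsto> y"
  have c: "?t \<in> car A" "?u \<in> car A" "?v \<in> car A" "?u \<odot> ?v \<in> car A" using e x y by auto
  have "?u \<odot> ?v \<odot> e = ?u \<odot> ?v \<odot> (e \<odot> e)" using idem by simp
  also have "\<dots> = (?u \<odot> e) \<odot> (?v \<odot> e)" using mul_assoc mul_comm c e by (metis mul_closed)
  also have "\<dots> \<preceq> x \<odot> y" using mul_mono mul_imp_le mul_comm e x y c by simp
  finally have le1: "?u \<odot> ?v \<preceq> ?t" using residuation[of "?u \<odot> ?v" e "x \<odot> y"] c e x y by simp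
  have "?t \<preceq> ?u" using imp_mono_right[OF e _ x mul_le_left[OF x y]] x y by simp
  moreover have "?t \<preceq> ?v" using imp_mono_right[OF e _ y mul_le_left[OF y x]] mul_comm x y by simp
  ultimately have tt: "?t \<odot> ?t \<preceq> ?u \<odot> ?v" using mul_mono c by simp
  have "?t \<odot> e \<preceq> x \<odot> y" using mul_imp_le[of e "x \<odot> y"] mul_comm[of ?t e] e x y by simp
  moreover have "x \<odot> y \<preceq> ?u \<odot> ?v" using mul_mono le_imp_left c e x y by simp
  ultimately have te: "?t \<odot> e \<preceq> ?u \<odot> ?v" using le_trans c e x y by (meson mul_closed)
  \<comment> \<open>\<open>e\<close> and \<open>?t\<close> join to \<open>\<one>\<close>, so it suffices to compare \<open>?t\<close> and \<open>?u \<odot> ?v\<close> after multiplying by either\<close>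
  have "(e \<leadsto> ?t) \<leadsto> ?t = \<one>" using residuation[OF e e, of "x \<odot> y"] idem e x y by simp
  hence le2: "?t \<preceq> ?u \<odot> ?v" using le_by_join_cases[OF e c(1) c(1) c(4)] te tt by simp
  show ?thesis using le_antisym[OF c(1,4) le2 le1] .
qed

lemma hom_imp_idem: "hom (imp A e) A A"
  using e imp_idem_imp_distrib imp_idem_mul_distrib by (simp add: hom_def)

end

end

section \<open>Transfer along surjections and embeddings\<close>

lemma wajsberg_alg_if_wajsberg_hoop: "wajsberg_hoop A \<Longrightarrow> wajsberg_alg A"
  unfolding wajsberg_hoop_def basic_hoop_def
  by unfold_locales auto

lemma wajsberg_hoop_axioms:
  assumes "wajsberg_hoop A"
  shows "\<lbrakk>x \<in> car A; y \<in> car A; z \<in> car A\<rbrakk> \<Longrightarrow> mul A (mul A x y) z = mul A x (mul A y z)"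
    "\<lbrakk>x \<in> car A; y \<in> car A\<rbrakk> \<Longrightarrow> mul A x y = mul A y x"
    "x \<in> car A \<Longrightarrow> mul A x (one A) = x"
    "x \<in> car A \<Longrightarrow> imp A x x = one A"
    "\<lbrakk>x \<in> car A; y \<in> car A\<rbrakk> \<Longrightarrow> mul A x (imp A x y) = mul A y (imp A y x)"
    "\<lbrakk>x \<in> car A; y \<in> car A; z \<in> car A\<rbrakk> \<Longrightarrow> imp A x (imp A y z) = imp A (mul A x y) z"
    "\<lbrakk>x \<in> car A; y \<in> car A; z \<in> car A\<rbrakk> \<Longrightarrow>
       imp A (imp A (imp A x y) z) (imp A (imp A (imp A y x) z) z) = one A"
    "\<lbrakk>x \<in> car A; y \<in> car A\<rbrakk> \<Longrightarrow> imp A (imp A x y) y = imp A (imp A y x) x"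
  using assms unfolding wajsberg_hoop_def basic_hoop_def hoop_def hle_def by blast+

lemma wajsberg_hoop_is_alg: "wajsberg_hoop A \<Longrightarrow> is_alg A"
  unfolding wajsberg_hoop_def basic_hoop_def hoop_def by blast

lemma wajsberg_hoop_hom_image:
  assumes A: "wajsberg_hoop A" and h: "hom_onto h A B"
  shows "wajsberg_hoop B"
proof -
  have B: "is_alg B" and car_B: "car B = h ` car A" using h by (auto simp: hom_onto_def)
  have "mul B (h a) (h b) = h (mul A a b)" "imp B (h a) (h b) = h (imp A a b)"
    if "a \<in> car A" "b \<in> car A" for a b
    using h that by (auto simp: hom_onto_def hom_def)
  moreover have "one B = h (one A)" using h by (simp add: hom_onto_def hom_def)
  ultimately show ?thesis
    using B wajsberg_hoop_is_alg[OF A] wajsberg_hoop_axioms[OF A]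
    unfolding wajsberg_hoop_def basic_hoop_def hoop_def hle_def car_B
    by (simp add: is_alg_def)
qed

lemma wajsberg_hoop_embedded:
  assumes A: "wajsberg_hoop A" and B: "is_alg B" and g: "hom g B A" and inj: "inj_on g (car B)"
  shows "wajsberg_hoop B"
proof -
  have g_closed: "g a \<in> car A" if "a \<in> car B" for a using g that by (simp add: hom_def)
  have "g (mul B a b) = mul A (g a) (g b)" "g (imp B a b) = imp A (g a) (g b)"
    if "a \<in> car B" "b \<in> car B" for a b
    using g that by (auto simp: hom_def)
  moreover have "g (one B) = one A" using g by (simp add: hom_def)
  ultimately show ?thesis
    using B g_closed wajsberg_hoop_axioms[OF A]
    unfolding wajsberg_hoop_def basic_hoop_def hoop_def hle_def
    by (simp add: is_alg_def inj_on_eq_iff[OF inj, symmetric])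
qed

lemma eval_hom:
  assumes "hom g B A" "is_alg B" "\<forall>i. v i \<in> car B"
  shows "eval B v t \<in> car B \<and> g (eval B v t) = eval A (g \<circ> v) t"
  using assms by (induction t) (auto simp: hom_def is_alg_def)

lemma sat_qeq_embedded:
  assumes A: "sat_qeq A q" and B: "is_alg B" and g: "hom g B A" and inj: "inj_on g (car B)"
  shows "sat_qeq B q"
  unfolding sat_qeq_def sat_eqn_def
proof (intro allI impI)
  fix v assume v: "\<forall>i. v i \<in> car B"
    and prems: "\<forall>e\<in>set (fst q). eval B v (fst e) = eval B v (snd e)"
  have ev: "eval B v t \<in> car B \<and> g (eval B v t) = eval A (g \<circ> v) t" for t
    using eval_hom[OF g B v] .
  have "\<forall>i. (g \<circ> v) i \<in> car A" using g v by (simp add: hom_def)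
  moreover have "\<forall>e\<in>set (fst q). eval A (g \<circ> v) (fst e) = eval A (g \<circ> v) (snd e)"
    using prems ev by metis
  ultimately have "eval A (g \<circ> v) (fst (snd q)) = eval A (g \<circ> v) (snd (snd q))"
    using A unfolding sat_qeq_def sat_eqn_def by blast
  thus "eval B v (fst (snd q)) = eval B v (snd (snd q))"
    using ev inj by (metis inj_onD)
qed

lemma in_QV_embedded:
  assumes "in_QV \<Sigma> A" "is_alg B" "hom g B A" "inj_on g (car B)"
  shows "in_QV \<Sigma> B"
  using assms wajsberg_hoop_embedded[of A B g] sat_qeq_embedded[of A _ B g]
  by (simp add: in_QV_def)

section \<open>Homomorphic images of finite Wajsberg hoops\<close>

lemma hom_onto_factor:
  assumes A: "is_alg A" and h: "hom_onto h A B" and t: "hom t A C"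
    and ker: "\<And>x y. x \<in> car A \<Longrightarrow> y \<in> car A \<Longrightarrow> h x = h y \<Longrightarrow> t x = t y"
  shows "\<exists>g. hom g B C \<and> (\<forall>x\<in>car A. g (h x) = t x)"
proof -
  define g where "g b = t (SOME x. x \<in> car A \<and> h x = b)" for b
  have gh: "g (h x) = t x" if "x \<in> car A" for x
  proof -
    let ?x' = "SOME x'. x' \<in> car A \<and> h x' = h x"
    have "\<exists>x'. x' \<in> car A \<and> h x' = h x" using that by blast
    hence "?x' \<in> car A \<and> h ?x' = h x" by (rule someI_ex)
    thus ?thesis unfolding g_def using ker[of ?x' x] that by blast
  qed
  have car_B: "car B = h ` car A" using h by (simp add: hom_onto_def)
  have "hom g B C" unfolding hom_def car_B
  proof (intro conjI ballI)
    show "g b \<in> car C" if "b \<in> h ` car A" for b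
      using that t gh by (auto simp: hom_def)
    show "g (one B) = one C"
      using A h t gh[of "one A"] by (auto simp: hom_onto_def hom_def is_alg_def)
    fix b1 b2 assume "b1 \<in> h ` car A" "b2 \<in> h ` car A"
    then obtain x y where xy: "x \<in> car A" "y \<in> car A" "b1 = h x" "b2 = h y" by auto
    have "mul A x y \<in> car A" "imp A x y \<in> car A" using A xy by (auto simp: is_alg_def)
    moreover have "h (mul A x y) = mul B b1 b2" "h (imp A x y) = imp B b1 b2"
      using h xy by (auto simp: hom_onto_def hom_def)
    moreover have "t (mul A x y) = mul C (t x) (t y)" "t (imp A x y) = imp C (t x) (t y)"
      using t xy by (auto simp: hom_def)
    ultimately show "g (mul B b1 b2) = mul C (g b1) (g b2)" "g (imp B b1 b2) = imp C (g b1) (g b2)"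
      using xy gh by metis+
  qed
  thus ?thesis using gh by blast
qed

lemma finite_wajsberg_hoop_hom_image_embeds:
  assumes A: "wajsberg_hoop A" and fin: "finite (car A)" and h: "hom_onto h A B"
  shows "\<exists>g. hom g B A \<and> inj_on g (car B)"
proof -
  interpret wajsberg_alg A by (rule wajsberg_alg_if_wajsberg_hoop[OF A])
  interpret B: wajsberg_alg B
    by (rule wajsberg_alg_if_wajsberg_hoop[OF wajsberg_hoop_hom_image[OF A h]])
  have h_car: "h x \<in> car B" if "x \<in> car A" for x
    using h that by (simp add: hom_onto_def hom_def)
  have h_one: "h \<one> = one B"
   and h_mul: "\<And>x y. x \<in> car A \<Longrightarrow> y \<in> car A \<Longrightarrow> h (x \<odot> y) = mul B (h x) (h y)"
   and h_imp: "\<And>x y. x \<in> car A \<Longrightarrow> y \<in> car A \<Longrightarrow> h (x \<leadsto> y) = imp B (h x) (h y)"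
    using h by (simp_all add: hom_onto_def hom_def)
  define F where "F = {x \<in> car A. h x = one B}"
  have F_car: "F \<subseteq> car A" by (auto simp: F_def)
  have "\<exists>e\<in>F. \<forall>x\<in>F. e \<preceq> x"
  proof (rule mul_closed_finite_has_least)
    show "finite F" using fin F_car finite_subset by blast
    have "\<one> \<in> F" using h_one by (simp add: F_def)
    thus "F \<noteq> {}" by blast
  qed (use F_car in \<open>auto simp: F_def h_mul\<close>)
  then obtain e where eF: "e \<in> F" and least: "\<And>x. x \<in> F \<Longrightarrow> e \<preceq> x" by blast
  have e: "e \<in> car A" and he: "h e = one B" using eF by (simp_all add: F_def)
  have idem: "e \<odot> e = e"
    using le_antisym[of "e \<odot> e" e] mul_le_left[OF e e] least[of "e \<odot> e"] eF e he h_mul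
    by (simp add: F_def)
  have ker: "e \<leadsto> x = e \<leadsto> y" if "x \<in> car A" "y \<in> car A" "h x = h y" for x y
  proof -
    have "x \<leadsto> y \<in> F" "y \<leadsto> x \<in> F" using that h_imp h_car by (auto simp: F_def)
    hence "e \<preceq> x \<leadsto> y" "e \<preceq> y \<leadsto> x" using least by auto
    hence "e \<leadsto> x \<preceq> e \<leadsto> y" "e \<leadsto> y \<preceq> e \<leadsto> x"
      using imp_idem_mono[OF e idem] that by auto
    thus ?thesis using le_antisym e that by (meson imp_closed)
  qed
  obtain g where g: "hom g B A" and gh: "\<forall>x\<in>car A. g (h x) = e \<leadsto> x"
    using hom_onto_factor[OF wajsberg_hoop_is_alg[OF A] h hom_imp_idem[OF e idem]] ker by blast
  have "inj_on g (car B)"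
  proof (rule inj_onI)
    fix b1 b2 assume "b1 \<in> car B" "b2 \<in> car B" and eq: "g b1 = g b2"
    then obtain x y where xy: "x \<in> car A" "y \<in> car A" "b1 = h x" "b2 = h y"
      using h unfolding hom_onto_def by blast
    have "h (e \<leadsto> x) = h (e \<leadsto> y)" using eq xy gh by simp
    thus "b1 = b2" using h_imp e xy he h_car by simp
  qed
  with g show ?thesis by blast
qed

section \<open>Finitely generated subalgebras\<close>

lemma gen_subset_car: "is_alg A \<Longrightarrow> G \<subseteq> car A \<Longrightarrow> gen A G \<subseteq> car A"
proof
  fix x assume "is_alg A" "G \<subseteq> car A" "x \<in> gen A G"
  thus "x \<in> car A" by (induction rule: gen.induct[OF \<open>x \<in> gen A G\<close>]) (auto simp: is_alg_def)
qed

lemma gen_car_update: "gen (A\<lparr>car := X\<rparr>) G = gen A G"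
proof
  show "gen (A\<lparr>car := X\<rparr>) G \<subseteq> gen A G"
  proof
    fix x assume "x \<in> gen (A\<lparr>car := X\<rparr>) G"
    thus "x \<in> gen A G" by (induction rule: gen.induct) (auto intro: gen.intros)
  qed
  show "gen A G \<subseteq> gen (A\<lparr>car := X\<rparr>) G"
  proof
    fix x assume "x \<in> gen A G"
    thus "x \<in> gen (A\<lparr>car := X\<rparr>) G"
      by (induction rule: gen.induct)
        (auto intro: gen.intros gen.gen_one[of "A\<lparr>car := X\<rparr>", simplified]
          gen.gen_mul[of _ "A\<lparr>car := X\<rparr>", simplified] gen.gen_imp[of _ "A\<lparr>car := X\<rparr>", simplified])
  qed
qed

lemma is_alg_gen: "is_alg (A\<lparr>car := gen A G\<rparr>)"
  by (auto simp: is_alg_def intro: gen.intros)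

lemma in_QV_gen:
  assumes "in_QV \<Sigma> A" "G \<subseteq> car A"
  shows "in_QV \<Sigma> (A\<lparr>car := gen A G\<rparr>)"
proof (rule in_QV_embedded[OF assms(1) is_alg_gen, of id])
  have "gen A G \<subseteq> car A"
    using gen_subset_car assms wajsberg_hoop_is_alg by (metis in_QV_def)
  thus "hom id (A\<lparr>car := gen A G\<rparr>) A" by (auto simp: hom_def)
qed simp

lemma hom_image_gen:
  assumes "is_alg A" "hom f A B" "G \<subseteq> car A"
  shows "f ` gen A G \<subseteq> gen B (f ` G)"
proof clarify
  fix x assume "x \<in> gen A G"
  thus "f x \<in> gen B (f ` G)"
  proof (induction rule: gen.induct)
    case (gen_mul x y)
    hence "x \<in> car A" "y \<in> car A" using gen_subset_car assms by blast+
    thus ?case using assms gen_mul.IH by (simp add: hom_def gen.gen_mul)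
  next
    case (gen_imp x y)
    hence "x \<in> car A" "y \<in> car A" using gen_subset_car assms by blast+
    thus ?case using assms gen_imp.IH by (simp add: hom_def gen.gen_imp)
  qed (use assms in \<open>auto simp: hom_def intro: gen.intros\<close>)
qed

lemma hom_onto_gen:
  assumes "is_alg A" "hom h A B" "G \<subseteq> car A"
  shows "hom_onto h (A\<lparr>car := gen A G\<rparr>) (B\<lparr>car := h ` gen A G\<rparr>)"
proof -
  have "gen A G \<subseteq> car A" using gen_subset_car assms by blast
  hence "mul B (h x) (h y) = h (mul A x y)" "imp B (h x) (h y) = h (imp A x y)"
    if "x \<in> gen A G" "y \<in> gen A G" for x y
    using assms(2) subsetD[OF \<open>gen A G \<subseteq> car A\<close>] that by (simp_all add: hom_def)
  moreover have "one B = h (one A)" using assms(2) by (simp add: hom_def)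
  ultimately show ?thesis
    using assms(2) \<open>gen A G \<subseteq> car A\<close>
    by (auto simp: hom_onto_def hom_def is_alg_def intro: gen.intros)
qed

instance trm :: countable by countable_datatype

lemma gen_subset_range_eval:
  assumes "G \<subseteq> range w"
  shows "gen A G \<subseteq> range (eval A w)"
proof
  fix x assume "x \<in> gen A G"
  thus "x \<in> range (eval A w)"
  proof (induction rule: gen.induct)
    case (gen_base x)
    then obtain i where "x = eval A w (Var i)" using assms by auto
    thus ?case by blast
  next
    case gen_one
    have "one A = eval A w One" by simp
    thus ?case by blast
  next
    case (gen_mul x y)
    then obtain s t where "x = eval A w s" "y = eval A w t" by blast
    hence "mul A x y = eval A w (Mul s t)" by simp
    thus ?case by blast
  next
    case (gen_imp x y)
    then obtain s t where "x = eval A w s" "y = eval A w t" by blast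
    hence "imp A x y = eval A w (Imp s t)" by simp
    thus ?case by blast
  qed
qed

lemma countable_gen:
  assumes "finite G"
  shows "countable (gen A G)"
proof -
  have "countable (insert (one A) G)" using assms by (simp add: countable_finite)
  hence "G \<subseteq> range (from_nat_into (insert (one A) G))" by (auto simp: range_from_nat_into)
  hence "gen A G \<subseteq> range (eval A (from_nat_into (insert (one A) G)))"
    by (rule gen_subset_range_eval)
  thus ?thesis by (rule countable_subset[OF _ countable_image[OF countableI_type]])
qed

lemma locally_finite_QV_finite:
  assumes lf: "locally_finite_QV \<Sigma>" and A: "in_QV \<Sigma> A" and fg: "fin_gen A"
  shows "finite (car A)"
proof -
  obtain G where G: "finite G" "G \<subseteq> car A" "gen A G = car A" using fg by (auto simp: fin_gen_def)
  have alg: "is_alg A" using A by (simp add: in_QV_def wajsberg_hoop_is_alg)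
  have "countable (car A)" using countable_gen[OF G(1), of A] G(3) by simp
  \<comment> \<open>transport \<open>A\<close> to the naturals along \<open>to_nat_on\<close>, which local finiteness speaks about\<close>
  define f where "f = to_nat_on (car A)"
  define f' where "f' = from_nat_into (car A)"
  have f'_f: "f' (f x) = x" if "x \<in> car A" for x
    using \<open>countable (car A)\<close> that by (simp add: f_def f'_def)
  define N :: "nat halg" where "N = \<lparr>car = f ` car A, mul = \<lambda>x y. f (mul A (f' x) (f' y)),
      imp = \<lambda>x y. f (imp A (f' x) (f' y)), one = f (one A)\<rparr>"
  have N: "is_alg N" using alg by (auto simp: is_alg_def N_def f'_f)
  have "in_QV \<Sigma> N"
  proof (rule in_QV_embedded[OF A N])
    show "hom f' N A" using alg by (auto simp: hom_def is_alg_def N_def f'_f)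
    show "inj_on f' (car N)" by (auto simp: N_def f'_f intro!: inj_onI)
  qed
  moreover have "fin_gen N" unfolding fin_gen_def
  proof (intro exI conjI)
    have "hom f A N" using alg by (auto simp: hom_def is_alg_def N_def f'_f)
    hence "f ` gen A G \<subseteq> gen N (f ` G)" using hom_image_gen alg G(2) by blast
    moreover have "f ` G \<subseteq> car N" using G(2) by (auto simp: N_def)
    hence "gen N (f ` G) \<subseteq> car N" using gen_subset_car N by blast
    ultimately show "gen N (f ` G) = car N" using G(3) by (auto simp: N_def)
  qed (use G in \<open>auto simp: N_def\<close>)
  ultimately have "finite (car N)" using lf by (simp add: locally_finite_QV_def)
  moreover have "inj_on f (car A)" using f'_f by (rule inj_on_inverseI)
  ultimately show ?thesis by (simp add: N_def finite_image_iff)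
qed

section \<open>Closure under homomorphic images\<close>

primrec vars :: "trm \<Rightarrow> nat set" where
  "vars (Var i) = {i}"
| "vars One = {}"
| "vars (Mul s t) = vars s \<union> vars t"
| "vars (Imp s t) = vars s \<union> vars t"

lemma finite_vars: "finite (vars t)"
  by (induction t) auto

lemma eval_cong: "(\<And>i. i \<in> vars t \<Longrightarrow> v i = v' i) \<Longrightarrow> eval A v t = eval A v' t"
  by (induction t) auto

lemma eval_car_update: "eval (A\<lparr>car := X\<rparr>) v t = eval A v t"
  by (induction t) auto

lemma sat_qeq_if_sat_qeq_finite_subsets:
  assumes local: "\<And>X. finite X \<Longrightarrow> X \<subseteq> car B \<Longrightarrow> \<exists>Y. X \<subseteq> Y \<and> one B \<in> Y \<and> sat_qeq (B\<lparr>car := Y\<rparr>) q"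
  shows "sat_qeq B q"
  unfolding sat_qeq_def
proof (intro allI impI)
  fix v assume v: "\<forall>i. v i \<in> car B" and prems: "\<forall>e\<in>set (fst q). sat_eqn B v e"
  define V where "V = (\<Union>e\<in>insert (snd q) (set (fst q)). vars (fst e) \<union> vars (snd e))"
  have "finite V" by (simp add: V_def finite_vars)
  then obtain Y where Y: "v ` V \<subseteq> Y" "one B \<in> Y" and sat: "sat_qeq (B\<lparr>car := Y\<rparr>) q"
    using local[of "v ` V"] v by blast
  \<comment> \<open>\<open>v\<close> may leave \<open>Y\<close> outside the variables of \<open>q\<close>, so it is redirected to \<open>one B\<close> there\<close>
  define v' where "v' i = (if i \<in> V then v i else one B)" for i
  have "\<forall>i. v' i \<in> car (B\<lparr>car := Y\<rparr>)" using Y by (auto simp: v'_def)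
  moreover have ev: "eval (B\<lparr>car := Y\<rparr>) v' t = eval B v t" if "vars t \<subseteq> V" for t
    unfolding eval_car_update using that by (intro eval_cong) (auto simp: v'_def)
  moreover have "vars (fst e) \<subseteq> V" "vars (snd e) \<subseteq> V" if "e \<in> insert (snd q) (set (fst q))" for e
    using that by (auto simp: V_def)
  ultimately show "sat_eqn B v (snd q)"
    using sat prems unfolding sat_qeq_def sat_eqn_def by (metis insert_iff)
qed

lemma in_QV_antimono: "\<Sigma> \<subseteq> \<Sigma>' \<Longrightarrow> in_QV \<Sigma>' A \<Longrightarrow> in_QV \<Sigma> A"
  by (auto simp: in_QV_def)

lemma in_QV_hom_image:
  assumes lf: "locally_finite_QV \<Sigma>" and sub: "\<Sigma> \<subseteq> \<Sigma>'" and A: "in_QV \<Sigma>' A"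
    and h: "hom_onto h A B"
  shows "in_QV \<Sigma>' B"
proof -
  have alg: "is_alg A" using A by (simp add: in_QV_def wajsberg_hoop_is_alg)
  have "sat_qeq B q" if "q \<in> \<Sigma>'" for q
  proof (rule sat_qeq_if_sat_qeq_finite_subsets)
    fix X assume "finite X" "X \<subseteq> car B"
    moreover have "car B = h ` car A" using h by (simp add: hom_onto_def)
    ultimately obtain G where G: "G \<subseteq> car A" "finite G" "X = h ` G"
      using finite_subset_image by metis
    let ?A\<^sub>0 = "A\<lparr>car := gen A G\<rparr>" and ?B\<^sub>0 = "B\<lparr>car := h ` gen A G\<rparr>"
    have A\<^sub>0: "in_QV \<Sigma>' ?A\<^sub>0" using in_QV_gen[OF A G(1)] .
    have "fin_gen ?A\<^sub>0" unfolding fin_gen_def gen_car_update using G by (auto intro: gen.gen_base)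
    hence "finite (car ?A\<^sub>0)"
      using locally_finite_QV_finite[OF lf in_QV_antimono[OF sub A\<^sub>0]] by simp
    moreover have h\<^sub>0: "hom_onto h ?A\<^sub>0 ?B\<^sub>0"
      using h hom_onto_gen[OF alg _ G(1)] unfolding hom_onto_def by blast
    ultimately obtain g where g: "hom g ?B\<^sub>0 ?A\<^sub>0" "inj_on g (car ?B\<^sub>0)"
      using finite_wajsberg_hoop_hom_image_embeds A\<^sub>0 unfolding in_QV_def by blast
    have "in_QV \<Sigma>' ?B\<^sub>0" using in_QV_embedded[OF A\<^sub>0 _ g] h\<^sub>0 unfolding hom_onto_def by blast
    moreover have "X \<subseteq> h ` gen A G" using G(3) by (auto intro: gen.gen_base)
    moreover have "one B \<in> h ` gen A G"
    proof
      show "one B = h (one A)" using h by (simp add: hom_onto_def hom_def)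
    qed (rule gen.gen_one)
    ultimately show "\<exists>Y. X \<subseteq> Y \<and> one B \<in> Y \<and> sat_qeq (B\<lparr>car := Y\<rparr>) q"
      using that by (auto simp: in_QV_def)
  qed
  moreover have "wajsberg_hoop B" using wajsberg_hoop_hom_image[OF _ h] A by (simp add: in_QV_def)
  ultimately show ?thesis by (simp add: in_QV_def)
qed

theorem theorem4p4:
  fixes \<Sigma> :: "qeq set"
  assumes "locally_finite_QV \<Sigma>"
  shows "(\<forall>(A :: 'a halg) (B :: 'b halg) h.
            in_QV \<Sigma> A \<and> hom_onto h A B \<longrightarrow> in_QV \<Sigma> B)
       \<and> (\<forall>\<Sigma>'. \<Sigma> \<subseteq> \<Sigma>' \<longrightarrow>
            (\<forall>(A :: 'a halg) (B :: 'b halg) h.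
               in_QV \<Sigma>' A \<and> hom_onto h A B \<and> in_QV \<Sigma> B \<longrightarrow> in_QV \<Sigma>' B))"
  using in_QV_hom_image[OF assms] by blast

end
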